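(* Let $M$ be an $R$-module. Then $M$ satisfies the dual of proper strong Property $\mathcal{A}$ if and only if $M$ satisfies the dual of Property $\mathcal{A}$ and $\mathfrak{m}\cap W_R(M)$ is an ideal of $R$ for every maximal ideal $\mathfrak{m}$ of $R$.
   Context: All rings are commutative with identity. For an $R$-module $M$, $W_R(M)=\{r\in R : rM\neq M\}$. An $R$-module $M$ satisfies the dual of Property $\mathcal{A}$ if for every finitely generated ideal $I$ of $R$ with $I\subseteq W_R(M)$ we have $IM\neq M$. $M$ satisfies the dual of proper strong Property $\mathcal{A}$ if for every proper finitely generated ideal $I=\langle a_1,\dots,a_n\rangle$ of $R$ with $a_i\in W_R(M)$ for all $i$, we have $IM\neq M$. *)

theory Defs
  imports Complex_Main
begin

definition is_ideal :: "'a::comm_ring_1 set \<Rightarrow> bool" where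
  "is_ideal I \<longleftrightarrow> 0 \<in> I \<and> (\<forall>x\<in>I. \<forall>y\<in>I. x + y \<in> I) \<and> (\<forall>r. \<forall>x\<in>I. r * x \<in> I)"

definition maximal_ideal :: "'a::comm_ring_1 set \<Rightarrow> bool" where
  "maximal_ideal m \<longleftrightarrow> is_ideal m \<and> m \<noteq> UNIV \<and>
     (\<forall>J. is_ideal J \<and> m \<subseteq> J \<longrightarrow> J = m \<or> J = UNIV)"

definition gen_ideal :: "'a::comm_ring_1 list \<Rightarrow> 'a set" where
  "gen_ideal as = {\<Sum>i<length as. c i * as ! i | c. True}"

definition fg_ideal :: "'a::comm_ring_1 set \<Rightarrow> bool" where
  "fg_ideal I \<longleftrightarrow> (\<exists>as. I = gen_ideal as)"

text \<open>For an R-module M (the type 'b with scalar multiplication scale):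
  W_R(M) = {r. rM \<noteq> M}.\<close>
definition W_set :: "('a::comm_ring_1 \<Rightarrow> 'b::ab_group_add \<Rightarrow> 'b) \<Rightarrow> 'a set" where
  "W_set scale = {r. range (scale r) \<noteq> UNIV}"

definition ideal_mult :: "('a::comm_ring_1 \<Rightarrow> 'b::ab_group_add \<Rightarrow> 'b) \<Rightarrow> 'a set \<Rightarrow> 'b set" where
  "ideal_mult scale I = module.span scale {scale a m | a m. a \<in> I}"

definition dual_property_A :: "('a::comm_ring_1 \<Rightarrow> 'b::ab_group_add \<Rightarrow> 'b) \<Rightarrow> bool" where
  "dual_property_A scale \<longleftrightarrow>
     (\<forall>I. is_ideal I \<and> fg_ideal I \<and> I \<subseteq> W_set scale \<longrightarrow> ideal_mult scale I \<noteq> UNIV)"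

definition dual_proper_strong_property_A :: "('a::comm_ring_1 \<Rightarrow> 'b::ab_group_add \<Rightarrow> 'b) \<Rightarrow> bool" where
  "dual_proper_strong_property_A scale \<longleftrightarrow>
     (\<forall>as. gen_ideal as \<noteq> UNIV \<and> set as \<subseteq> W_set scale \<longrightarrow>
        ideal_mult scale (gen_ideal as) \<noteq> UNIV)"

end

theory Submission
  imports Defs
begin

text \<open>If \<open>a \<in> I\<close> then \<open>aM \<subseteq> IM\<close>. Hence under the dual of proper strong Property \<open>\<A>\<close> every
  proper finitely generated ideal with generators in \<open>W\<^sub>R(M)\<close> lies entirely in \<open>W\<^sub>R(M)\<close>. Applied to
  the ideals generated by \<open>[]\<close>, \<open>[x]\<close> and \<open>[x, y]\<close> inside a maximal ideal \<open>\<m>\<close>, this shows that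
  \<open>\<m> \<inter> W\<^sub>R(M)\<close> is an ideal; it also gives the dual of Property \<open>\<A>\<close>, because a finitely generated ideal
  inside \<open>W\<^sub>R(M)\<close> misses \<open>1\<close>. Conversely, a proper finitely generated ideal lies in some maximal
  ideal \<open>\<m>\<close>; if its generators are in \<open>W\<^sub>R(M)\<close>, the whole ideal lies in the ideal \<open>\<m> \<inter> W\<^sub>R(M)\<close>, and
  the dual of Property \<open>\<A>\<close> applies.\<close>

lemma is_ideal_zero: "is_ideal I \<Longrightarrow> 0 \<in> I"
  by (simp add: is_ideal_def)

lemma is_ideal_add: "is_ideal I \<Longrightarrow> x \<in> I \<Longrightarrow> y \<in> I \<Longrightarrow> x + y \<in> I"
  by (simp add: is_ideal_def)

lemma is_ideal_mult_left: "is_ideal I \<Longrightarrow> x \<in> I \<Longrightarrow> r * x \<in> I"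
  by (simp add: is_ideal_def)

lemma is_ideal_sum:
  assumes "is_ideal I" "finite A" "\<And>i. i \<in> A \<Longrightarrow> f i \<in> I"
  shows "sum f A \<in> I"
  using assms(2,3)
  by (induction A rule: finite_induct) (auto intro: is_ideal_zero[OF assms(1)] is_ideal_add[OF assms(1)])

lemma is_ideal_neq_UNIV_iff:
  assumes "is_ideal J"
  shows "J \<noteq> UNIV \<longleftrightarrow> 1 \<notin> J"
proof
  assume "J \<noteq> UNIV"
  show "1 \<notin> J"
  proof
    assume "1 \<in> J"
    then have "r * 1 \<in> J" for r by (rule is_ideal_mult_left[OF assms])
    with \<open>J \<noteq> UNIV\<close> show False by auto
  qed
qed auto

lemma is_ideal_Union_chain:
  assumes "C \<noteq> {}" "subset.chain {J. is_ideal J} C"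
  shows "is_ideal (\<Union>C)"
proof -
  have ideals: "\<And>J. J \<in> C \<Longrightarrow> is_ideal J"
    and chain: "\<And>X Y. X \<in> C \<Longrightarrow> Y \<in> C \<Longrightarrow> X \<subseteq> Y \<or> Y \<subseteq> X"
    using assms(2) unfolding subset.chain_def by auto
  show ?thesis
    unfolding is_ideal_def
  proof (intro conjI ballI allI)
    show "0 \<in> \<Union>C" using assms(1) ideals unfolding is_ideal_def by blast
  next
    fix x y assume "x \<in> \<Union>C" "y \<in> \<Union>C"
    then obtain X Y where "X \<in> C" "Y \<in> C" "x \<in> X" "y \<in> Y" by blast
    with chain[of X Y] ideals show "x + y \<in> \<Union>C" unfolding is_ideal_def by blast
  next
    fix r x assume "x \<in> \<Union>C"
    then obtain X where "X \<in> C" "x \<in> X" by blast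
    with ideals show "r * x \<in> \<Union>C" unfolding is_ideal_def by blast
  qed
qed

lemma exists_maximal_ideal_superset:
  fixes I :: "'a::comm_ring_1 set"
  assumes "is_ideal I" "I \<noteq> UNIV"
  shows "\<exists>m. maximal_ideal m \<and> I \<subseteq> m"
proof -
  define A where "A = {J. is_ideal J \<and> I \<subseteq> J \<and> (1::'a) \<notin> J}"
  have "\<exists>M\<in>A. \<forall>X\<in>A. M \<subseteq> X \<longrightarrow> X = M"
  proof (rule subset_Zorn_nonempty)
    show "A \<noteq> {}" using assms is_ideal_neq_UNIV_iff unfolding A_def by blast
  next
    fix C assume C: "C \<noteq> {}" "subset.chain A C"
    then have "C \<subseteq> A" "subset.chain {J. is_ideal J} C"
      by (auto simp: A_def subset.chain_def)
    with C show "\<Union>C \<in> A"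
      using is_ideal_Union_chain by (auto simp: A_def)
  qed
  then obtain M where M: "M \<in> A" "\<And>X. X \<in> A \<Longrightarrow> M \<subseteq> X \<Longrightarrow> X = M" by blast
  have "maximal_ideal M"
    unfolding maximal_ideal_def
  proof (intro conjI allI impI)
    show "is_ideal M" "M \<noteq> UNIV" using M(1) by (auto simp: A_def)
  next
    fix J assume J: "is_ideal J \<and> M \<subseteq> J"
    show "J = M \<or> J = UNIV"
    proof (cases "J = UNIV")
      case False
      then have "J \<in> A" using J M(1) is_ideal_neq_UNIV_iff by (auto simp: A_def)
      then show ?thesis using M(2) J by blast
    qed simp
  qed
  moreover have "I \<subseteq> M" using M(1) by (simp add: A_def)
  ultimately show ?thesis by blast
qed

lemma is_ideal_gen_ideal: "is_ideal (gen_ideal as)"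
  unfolding is_ideal_def gen_ideal_def
proof (intro conjI ballI allI)
  show "0 \<in> {\<Sum>i<length as. c i * as ! i |c. True}"
    by (intro CollectI exI[of _ "\<lambda>_. 0"]) simp
next
  fix x y assume "x \<in> {\<Sum>i<length as. c i * as ! i |c. True}" "y \<in> {\<Sum>i<length as. c i * as ! i |c. True}"
  then obtain c d where "x = (\<Sum>i<length as. c i * as ! i)" "y = (\<Sum>i<length as. d i * as ! i)" by blast
  then show "x + y \<in> {\<Sum>i<length as. c i * as ! i |c. True}"
    by (intro CollectI exI[of _ "\<lambda>i. c i + d i"]) (simp add: sum.distrib distrib_right)
next
  fix r x assume "x \<in> {\<Sum>i<length as. c i * as ! i |c. True}"
  then obtain c where "x = (\<Sum>i<length as. c i * as ! i)" by blast
  then show "r * x \<in> {\<Sum>i<length as. c i * as ! i |c. True}"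
    by (intro CollectI exI[of _ "\<lambda>i. r * c i"]) (simp add: sum_distrib_left mult.assoc)
qed

lemma set_subset_gen_ideal: "set as \<subseteq> gen_ideal as"
proof
  fix a assume "a \<in> set as"
  then obtain j where j: "j < length as" "as ! j = a" by (auto simp: in_set_conv_nth)
  have "(\<Sum>i<length as. (if i = j then 1 else 0) * as ! i) = (\<Sum>i<length as. if i = j then as ! i else 0)"
    by (rule sum.cong) auto
  also have "\<dots> = a" using j by simp
  finally show "a \<in> gen_ideal as"
    unfolding gen_ideal_def by (intro CollectI exI[of _ "\<lambda>i. if i = j then 1 else 0"]) simp
qed

lemma gen_ideal_subset: "is_ideal J \<Longrightarrow> set as \<subseteq> J \<Longrightarrow> gen_ideal as \<subseteq> J"
proof
  fix x assume J: "is_ideal J" "set as \<subseteq> J" and "x \<in> gen_ideal as"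
  then obtain c where x: "x = (\<Sum>i<length as. c i * as ! i)" unfolding gen_ideal_def by blast
  have "\<And>i. i < length as \<Longrightarrow> c i * as ! i \<in> J"
    using J nth_mem unfolding is_ideal_def by blast
  then show "x \<in> J" unfolding x by (intro is_ideal_sum[OF J(1)]) auto
qed

lemma gen_ideal_Nil: "gen_ideal [] = {0}"
  unfolding gen_ideal_def by simp

lemma is_ideal_if_gen_ideal_subset:
  assumes "\<And>as. set as \<subseteq> S \<Longrightarrow> gen_ideal as \<subseteq> S"
  shows "is_ideal S"
  unfolding is_ideal_def
proof (intro conjI ballI allI)
  show "0 \<in> S" using assms[of "[]"] by (simp add: gen_ideal_Nil)
next
  fix x y assume "x \<in> S" "y \<in> S"
  then have "gen_ideal [x, y] \<subseteq> S" by (intro assms) simp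
  moreover have "x + y \<in> gen_ideal [x, y]"
    using set_subset_gen_ideal[of "[x, y]"] by (intro is_ideal_add[OF is_ideal_gen_ideal]) auto
  ultimately show "x + y \<in> S" by blast
next
  fix r x assume "x \<in> S"
  then have "gen_ideal [x] \<subseteq> S" by (intro assms) simp
  moreover have "r * x \<in> gen_ideal [x]"
    using set_subset_gen_ideal[of "[x]"] by (intro is_ideal_mult_left[OF is_ideal_gen_ideal]) auto
  ultimately show "r * x \<in> S" by blast
qed

lemma one_notin_W_set:
  assumes "module scale"
  shows "1 \<notin> W_set scale"
proof -
  have "scale 1 = id" using module.scale_one[OF assms] by auto
  then show ?thesis by (simp add: W_set_def)
qed

lemma range_scale_subset_ideal_mult:
  assumes "module scale" "a \<in> I"
  shows "range (scale a) \<subseteq> ideal_mult scale I"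
  unfolding ideal_mult_def
proof (rule image_subsetI)
  fix m
  have "scale a m \<in> {scale a m | a m. a \<in> I}" using assms(2) by blast
  then show "scale a m \<in> module.span scale {scale a m | a m. a \<in> I}"
    by (rule module.span_base[OF assms(1)])
qed

lemma gen_ideal_subset_W_set:
  assumes "module scale" "dual_proper_strong_property_A scale"
    and "gen_ideal as \<noteq> UNIV" "set as \<subseteq> W_set scale"
  shows "gen_ideal as \<subseteq> W_set scale"
proof
  fix a assume "a \<in> gen_ideal as"
  then have "range (scale a) \<subseteq> ideal_mult scale (gen_ideal as)"
    by (rule range_scale_subset_ideal_mult[OF assms(1)])
  moreover have "ideal_mult scale (gen_ideal as) \<noteq> UNIV"
    using assms(2-4) unfolding dual_proper_strong_property_A_def by blast
  ultimately show "a \<in> W_set scale" unfolding W_set_def by blast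
qed

lemma dual_property_A_if_dual_proper_strong:
  assumes "module scale" "dual_proper_strong_property_A scale"
  shows "dual_property_A scale"
  unfolding dual_property_A_def
proof (intro allI impI)
  fix I assume I: "is_ideal I \<and> fg_ideal I \<and> I \<subseteq> W_set scale"
  then obtain as where as: "I = gen_ideal as" unfolding fg_ideal_def by blast
  have "gen_ideal as \<noteq> UNIV" using I one_notin_W_set[OF assms(1)] as by blast
  moreover have "set as \<subseteq> W_set scale" using I as set_subset_gen_ideal by blast
  ultimately show "ideal_mult scale I \<noteq> UNIV"
    using assms(2) as unfolding dual_proper_strong_property_A_def by blast
qed

lemma is_ideal_inter_W_set_if_dual_proper_strong:
  assumes "module scale" "dual_proper_strong_property_A scale" "is_ideal m" "m \<noteq> UNIV"
  shows "is_ideal (m \<inter> W_set scale)"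
proof (rule is_ideal_if_gen_ideal_subset)
  fix as assume as: "set as \<subseteq> m \<inter> W_set scale"
  then have "gen_ideal as \<subseteq> m" using gen_ideal_subset[OF assms(3)] by blast
  moreover have "gen_ideal as \<subseteq> W_set scale"
    using \<open>gen_ideal as \<subseteq> m\<close> assms(4) as by (intro gen_ideal_subset_W_set[OF assms(1,2)]) auto
  ultimately show "gen_ideal as \<subseteq> m \<inter> W_set scale" by blast
qed

lemma dual_proper_strong_if_dual_property_A:
  assumes "dual_property_A scale" "\<And>m. maximal_ideal m \<Longrightarrow> is_ideal (m \<inter> W_set scale)"
  shows "dual_proper_strong_property_A scale"
  unfolding dual_proper_strong_property_A_def
proof (intro allI impI)
  fix as assume as: "gen_ideal as \<noteq> UNIV \<and> set as \<subseteq> W_set scale"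
  then obtain m where m: "maximal_ideal m" "gen_ideal as \<subseteq> m"
    using exists_maximal_ideal_superset[OF is_ideal_gen_ideal] by blast
  then have "gen_ideal as \<subseteq> m \<inter> W_set scale"
    using as set_subset_gen_ideal[of as] assms(2)[OF m(1)] gen_ideal_subset by blast
  moreover have "fg_ideal (gen_ideal as)" unfolding fg_ideal_def by blast
  ultimately show "ideal_mult scale (gen_ideal as) \<noteq> UNIV"
    using assms(1) is_ideal_gen_ideal unfolding dual_property_A_def by blast
qed

theorem theorem3p3:
  fixes scale :: "'a::comm_ring_1 \<Rightarrow> 'b::ab_group_add \<Rightarrow> 'b"
  assumes "module scale"
  shows "dual_proper_strong_property_A scale \<longleftrightarrow>
           (dual_property_A scale \<and>
            (\<forall>m. maximal_ideal m \<longrightarrow> is_ideal (m \<inter> W_set scale)))"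
proof (intro iffI conjI allI impI)
  assume strong: "dual_proper_strong_property_A scale"
  then show "dual_property_A scale"
    by (rule dual_property_A_if_dual_proper_strong[OF assms])
  fix m :: "'a set" assume "maximal_ideal m"
  then have "is_ideal m" "m \<noteq> UNIV" unfolding maximal_ideal_def by blast+
  then show "is_ideal (m \<inter> W_set scale)"
    by (rule is_ideal_inter_W_set_if_dual_proper_strong[OF assms strong])
next
  assume "dual_property_A scale \<and> (\<forall>m. maximal_ideal m \<longrightarrow> is_ideal (m \<inter> W_set scale))"
  then show "dual_proper_strong_property_A scale"
    by (intro dual_proper_strong_if_dual_property_A) blast+
qed

end
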